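(* If a PPT three-mode CM $\gamma$ is fully separable, then $$\mathrm{tr}\,N\ge2,\quad \mathrm{tr}\,\tilde N\ge2,\quad \det N>0,\quad \det\tilde N>0.$$
   Context: Conventions: Three modes $A,B,C$, phase-space vectors ordered mode-wise as $(q_A,p_A,q_B,p_B,q_C,p_C)$. $J_1=\begin{pmatrix}0&-1\\1&0\end{pmatrix}$, $J=J_1\oplus J_1\oplus J_1$. A CM of $n$ modes is a real symmetric $2n\times2n$ matrix $\gamma>0$ with $\gamma-iJ\ge0$. $X\ge Y$ means $X-Y$ is positive semidefinite. For $x\in\{A,B,C\}$, $\tilde J_x$ is $J$ with the $2\times2$ diagonal block of mode $x$ replaced by $-J_1$, and $\tilde J_0=J$. A three-mode CM $\gamma$ is called PPT if $\gamma\ge i\tilde J_x$ for all $x\in\{0,A,B,C\}$, and fully separable if there exist one-mode CMs $\gamma_A,\gamma_B,\gamma_C$ with $\gamma\ge\gamma_A\oplus\gamma_B\oplus\gamma_C$. Write $\gamma=\begin{pmatrix}A&C\\C^T&B\end{pmatrix}$ with $A$ the $2\times2$ block of mode $A$, $B$ the $4\times4$ block of modes $B,C$, $C$ the $2\times4$ off-diagonal block; let $J_{BC}=J_1\oplus J_1$, $\tilde J_{BC}=J_1\oplus(-J_1)$, and define the (Hermitian, possibly complex) $2\times2$ matrices $$N=A-C(B-iJ_{BC})^{-1}C^T,\qquad \tilde N=A-C(B-i\tilde J_{BC})^{-1}C^T,$$ where the inverses are Moore–Penrose pseudoinverses (inversion on the range); these are well defined because $\ker(B-iJ_{BC}),\ker(B-i\tilde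 J_{BC})\subseteq\ker C$ for PPT $\gamma$. *)

theory Defs
  imports "Jordan_Normal_Form.Determinant"
begin

(* Symplectic-type form for n modes, with the 2x2 block of every mode in S
   replaced by -J1.  J1 = [[0,-1],[1,0]]; ordering (q_1,p_1,...,q_n,p_n). *)
definition J1entry :: "nat \<Rightarrow> nat \<Rightarrow> complex" where
  "J1entry i j = (if i = 0 \<and> j = 1 then -1 else if i = 1 \<and> j = 0 then 1 else 0)"

definition Jflip :: "nat \<Rightarrow> nat set \<Rightarrow> complex mat" where
  "Jflip n S = mat (2*n) (2*n) (\<lambda>(i,j).
      if i div 2 = j div 2
      then (if i div 2 \<in> S then -1 else 1) * J1entry (i mod 2) (j mod 2)
      else 0)"

abbreviation Jsym :: "nat \<Rightarrow> complex mat" where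
  "Jsym n \<equiv> Jflip n {}"

abbreviation cmat :: "real mat \<Rightarrow> complex mat" where
  "cmat M \<equiv> map_mat complex_of_real M"

definition qform :: "nat \<Rightarrow> complex mat \<Rightarrow> (nat \<Rightarrow> complex) \<Rightarrow> complex" where
  "qform n M v = (\<Sum>i<n. \<Sum>j<n. cnj (v i) * M $$ (i,j) * v j)"

definition psd :: "nat \<Rightarrow> complex mat \<Rightarrow> bool" where
  "psd n M \<longleftrightarrow> M \<in> carrier_mat n n \<and>
     (\<forall>v. qform n M v \<in> \<real> \<and> 0 \<le> Re (qform n M v))"

definition posdef_real :: "nat \<Rightarrow> real mat \<Rightarrow> bool" where
  "posdef_real n M \<longleftrightarrow> M \<in> carrier_mat n n \<and>
     (\<forall>v::nat \<Rightarrow> real. (\<exists>i<n. v i \<noteq> 0) \<longrightarrow>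
        0 < (\<Sum>i<n. \<Sum>j<n. v i * M $$ (i,j) * v j))"

definition CM :: "nat \<Rightarrow> real mat \<Rightarrow> bool" where
  "CM n \<gamma> \<longleftrightarrow> \<gamma> \<in> carrier_mat (2*n) (2*n) \<and> transpose_mat \<gamma> = \<gamma> \<and>
     posdef_real (2*n) \<gamma> \<and> psd (2*n) (cmat \<gamma> - \<i> \<cdot>\<^sub>m Jsym n)"

(* modes A,B,C are indexed 0,1,2; \tilde J_0 = Jflip 3 {}, \tilde J_A = Jflip 3 {0}, ... *)
definition PPT3 :: "real mat \<Rightarrow> bool" where
  "PPT3 \<gamma> \<longleftrightarrow> CM 3 \<gamma> \<and>
     (\<forall>S \<in> {{}, {0}, {1}, {2}}. psd 6 (cmat \<gamma> - \<i> \<cdot>\<^sub>m Jflip 3 S))"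

definition dsum3 :: "real mat \<Rightarrow> real mat \<Rightarrow> real mat \<Rightarrow> real mat" where
  "dsum3 a b c = four_block_mat a (0\<^sub>m 2 4) (0\<^sub>m 4 2)
                   (four_block_mat b (0\<^sub>m 2 2) (0\<^sub>m 2 2) c)"

definition fully_separable3 :: "real mat \<Rightarrow> bool" where
  "fully_separable3 \<gamma> \<longleftrightarrow> (\<exists>gA gB gC. CM 1 gA \<and> CM 1 gB \<and> CM 1 gC \<and>
      psd 6 (cmat (\<gamma> - dsum3 gA gB gC)))"

definition adj :: "complex mat \<Rightarrow> complex mat" where
  "adj M = transpose_mat (map_mat cnj M)"

definition pinv :: "nat \<Rightarrow> complex mat \<Rightarrow> complex mat" where
  "pinv n M = (THE X. X \<in> carrier_mat n n \<and> M * X * M = M \<and> X * M * X = X \<and>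
                     adj (M * X) = M * X \<and> adj (X * M) = X * M)"

(* blocks of a 6x6 gamma: A (mode A), B (modes B,C), C (off-diagonal) *)
definition blkA :: "real mat \<Rightarrow> real mat" where
  "blkA \<gamma> = mat 2 2 (\<lambda>(i,j). \<gamma> $$ (i,j))"
definition blkB :: "real mat \<Rightarrow> real mat" where
  "blkB \<gamma> = mat 4 4 (\<lambda>(i,j). \<gamma> $$ (i+2,j+2))"
definition blkC :: "real mat \<Rightarrow> real mat" where
  "blkC \<gamma> = mat 2 4 (\<lambda>(i,j). \<gamma> $$ (i,j+2))"

(* N (S = {}) and \tilde N (S = {1}, i.e. \tilde J_BC = J1 \<oplus> -J1) *)
definition Nmat :: "nat set \<Rightarrow> real mat \<Rightarrow> complex mat" where
  "Nmat S \<gamma> = cmat (blkA \<gamma>) -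
     cmat (blkC \<gamma>) * pinv 4 (cmat (blkB \<gamma>) - \<i> \<cdot>\<^sub>m Jflip 2 S) * cmat (transpose_mat (blkC \<gamma>))"

definition mtrace :: "complex mat \<Rightarrow> complex" where
  "mtrace M = (\<Sum>i<dim_row M. M $$ (i,i))"

end

theory Submission
  imports Defs "Jordan_Normal_Form.Gauss_Jordan_Elimination"
begin

text \<open>
  Suppose \<open>\<gamma> \<ge> \<gamma>\<^sub>A \<oplus> \<gamma>\<^sub>B \<oplus> \<gamma>\<^sub>C\<close> and let \<open>P = \<gamma> - i J\<close>, where \<open>J\<close> flips the same modes
  among \<open>B, C\<close> as the form defining \<open>N\<close> or its tilde variant. Extend \<open>x \<in> \<complex>\<^sup>2\<close> to
  \<open>w = (x, - X C\<^sup>T x)\<close>, where \<open>X\<close> is the pseudoinverse of the lower right block of \<open>P\<close>.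
  Since \<open>X\<close> is Hermitian with \<open>X (B - i J\<^sub>B\<^sub>C) X = X\<close>, the Schur complement identity gives
  \<open>w\<^sup>* P w = x\<^sup>* (N - i J\<^sub>1) x\<close>. Splitting
  \<open>P = (\<gamma> - \<gamma>\<^sub>A \<oplus> \<gamma>\<^sub>B \<oplus> \<gamma>\<^sub>C) + \<Oplus>\<^sub>k (\<gamma>\<^sub>k - i J\<^sub>k)\<close> with \<open>J\<^sub>k = \<plusminus>J\<^sub>1\<close> and using \<open>\<gamma>\<^sub>k \<plusminus> i J\<^sub>1 \<ge> 0\<close> for one-mode
  covariance matrices yields \<open>N \<ge> \<gamma>\<^sub>A\<close>, whence \<open>tr N \<ge> tr \<gamma>\<^sub>A \<ge> 2\<close> and
  \<open>det N \<ge> det \<gamma>\<^sub>A \<ge> 1\<close>.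
\<close>

lemma dim_adj[simp]: "dim_row (adj A) = dim_col A" "dim_col (adj A) = dim_row A"
  by (simp_all add: adj_def)

lemma adj_carrier_mat[simp]: "A \<in> carrier_mat m n \<Longrightarrow> adj A \<in> carrier_mat n m"
  by (simp add: adj_def)

lemma index_adj[simp]: "i < dim_col A \<Longrightarrow> j < dim_row A \<Longrightarrow> adj A $$ (i,j) = cnj (A $$ (j,i))"
  by (simp add: adj_def)

lemma adj_adj[simp]: "adj (adj A) = A"
  by (rule eq_matI) auto

lemma adj_mult: "dim_col A = dim_row B \<Longrightarrow> adj (A * B) = adj B * adj A"
  by (intro eq_matI) (auto simp: scalar_prod_def cnj_sum mult.commute)

lemma adj_add: "dim_row A = dim_row B \<Longrightarrow> dim_col A = dim_col B \<Longrightarrow> adj (A + B) = adj A + adj B"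
  by (intro eq_matI) auto

lemma adj_minus: "dim_row A = dim_row B \<Longrightarrow> dim_col A = dim_col B \<Longrightarrow> adj (A - B) = adj A - adj B"
  by (intro eq_matI) auto

lemma adj_uminus: "adj (- A) = - adj A"
  by (intro eq_matI) auto

lemma adj_mult_self_eq_0:
  assumes A: "A \<in> carrier_mat m n" and "adj A * A = 0\<^sub>m n n"
  shows "A = 0\<^sub>m m n"
proof (rule eq_matI)
  fix i j assume "i < dim_row (0\<^sub>m m n)" "j < dim_col (0\<^sub>m m n)"
  hence i: "i < m" and j: "j < n" by auto
  have "(\<Sum>k<m. cnj (A $$ (k,j)) * A $$ (k,j)) = (adj A * A) $$ (j,j)"
    using A j by (simp add: scalar_prod_def atLeast0LessThan)
  also have "\<dots> = 0" using assms(2) j by simp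
  finally have "complex_of_real (\<Sum>k<m. (cmod (A $$ (k,j)))\<^sup>2) = 0"
    unfolding of_real_sum by (simp only: complex_norm_square mult.commute)
  hence "(\<Sum>k<m. (cmod (A $$ (k,j)))\<^sup>2) = 0"
    by (simp only: of_real_eq_0_iff)
  hence "(cmod (A $$ (i,j)))\<^sup>2 = 0"
    using i by (subst (asm) sum_nonneg_eq_0_iff) auto
  thus "A $$ (i,j) = 0\<^sub>m m n $$ (i,j)" using i j by simp
qed (use A in auto)

lemma hermitian_principal_submatrix:
  assumes P: "P \<in> carrier_mat n n" and PH: "adj P = P" and mk: "m + k \<le> n"
  shows "adj (mat m m (\<lambda>(i,j). P $$ (i + k, j + k))) = mat m m (\<lambda>(i,j). P $$ (i + k, j + k))"
  (is "adj ?Q = ?Q")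
proof (rule eq_matI)
  fix i j assume "i < dim_row ?Q" "j < dim_col ?Q"
  moreover have "P $$ (i + k, j + k) = adj P $$ (i + k, j + k)" by (simp only: PH)
  ultimately show "adj ?Q $$ (i,j) = ?Q $$ (i,j)" using P mk by auto
qed auto

section \<open>The Moore-Penrose inverse of a Hermitian matrix\<close>

definition moore_penrose :: "nat \<Rightarrow> complex mat \<Rightarrow> complex mat \<Rightarrow> bool" where
  "moore_penrose n M X \<longleftrightarrow> X \<in> carrier_mat n n \<and> M * X * M = M \<and> X * M * X = X \<and>
     adj (M * X) = M * X \<and> adj (X * M) = X * M"

lemma moore_penrose_unique:
  assumes M: "M \<in> carrier_mat n n" and X: "moore_penrose n M X" and Y: "moore_penrose n M Y"
  shows "X = Y"
proof -
  have Xc: "X \<in> carrier_mat n n" and X1: "M * X * M = M" and X2: "X * M * X = X"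
    and X3: "adj (M * X) = M * X" and X4: "adj (X * M) = X * M"
    using X by (auto simp: moore_penrose_def)
  have Yc: "Y \<in> carrier_mat n n" and Y1: "M * Y * M = M" and Y2: "Y * M * Y = Y"
    and Y3: "adj (M * Y) = M * Y" and Y4: "adj (Y * M) = Y * M"
    using Y by (auto simp: moore_penrose_def)
  note simps = M Xc Yc carrier_matD[OF M] carrier_matD[OF Xc] carrier_matD[OF Yc] adj_mult
    assoc_mult_mat[of _ n n _ n _ n] mult_carrier_mat[of _ n n _ n]
  have "X = X * adj (M * X)" using X2 X3 by (simp add: simps)
  also have "\<dots> = X * adj (M * Y * M * X)" using Y1 by simp
  also have "\<dots> = X * adj (M * X) * adj (M * Y)" by (simp add: simps)
  also have "\<dots> = X * M * Y" using X2 X3 Y3 by (simp add: simps)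
  finally have XMY: "X = X * M * Y" .
  have "Y = adj (Y * M) * Y" using Y2 Y4 by (simp add: simps)
  also have "\<dots> = adj (Y * M * X * M) * Y" using X1 by (simp add: simps)
  also have "\<dots> = adj (X * M) * adj (Y * M) * Y" by (simp add: simps)
  also have "\<dots> = X * M * Y" using Y2 X4 Y4 by (simp add: simps)
  finally show ?thesis using XMY by simp
qed

lemma row_echelon_ginverse:
  fixes C :: "'a :: field mat"
  assumes C: "C \<in> carrier_mat n n" and p: "pivot_fun C f n"
  defines "H \<equiv> mat n n (\<lambda>(j,i). if f i < n \<and> j = f i then 1 else 0)"
  shows "C * H * C = C"
proof -
  have dr: "dim_row C = n" using C by auto
  note piv = pivot_funD[OF dr p]
  have CH: "C * H = mat n n (\<lambda>(k,i). if f i < n \<and> k = i then 1 else 0)" (is "_ = ?D")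
  proof (rule eq_matI)
    fix k i assume "k < dim_row ?D" and "i < dim_col ?D"
    hence k: "k < n" and i: "i < n" by auto
    have "(C * H) $$ (k,i) = (\<Sum>j<n. C $$ (k,j) * (if f i < n \<and> j = f i then 1 else 0))"
      using k i C by (simp add: H_def scalar_prod_def atLeast0LessThan)
    also have "\<dots> = (if f i < n then C $$ (k, f i) else 0)"
      by (auto simp: if_distrib cong: if_cong)
    also have "\<dots> = (if f i < n \<and> k = i then 1 else 0)"
      using piv(4)[of i] piv(5)[of i k] k i by auto
    finally show "(C * H) $$ (k,i) = ?D $$ (k,i)" using k i by simp
  qed (use C in \<open>auto simp: H_def\<close>)
  show ?thesis
  proof (rule eq_matI)
    fix k l assume k: "k < dim_row C" and l: "l < dim_col C"
    have "(C * H * C) $$ (k,l) = (\<Sum>i<n. (if f i < n \<and> k = i then 1 else 0) * C $$ (i,l))"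
      using k l C by (simp add: CH scalar_prod_def atLeast0LessThan)
    also have "\<dots> = (\<Sum>i<n. if i = k then (if f k < n then C $$ (k,l) else 0) else 0)"
      by (intro sum.cong) auto
    also have "\<dots> = (if f k < n then C $$ (k,l) else 0)"
      using k C by simp
    also have "\<dots> = C $$ (k,l)"
      using piv(1)[of k] piv(2)[of k l] k l C by auto
    finally show "(C * H * C) $$ (k,l) = C $$ (k,l)" .
  qed (use C in \<open>auto simp: H_def\<close>)
qed

lemma ginverse_exists:
  fixes A :: "'a :: field mat"
  assumes A: "A \<in> carrier_mat n n"
  shows "\<exists>G \<in> carrier_mat n n. A * G * A = A"
proof -
  define C where "C = gauss_jordan_single A"
  note gj = gauss_jordan_single[OF A C_def[symmetric]]
  have Cc: "C \<in> carrier_mat n n" by (rule gj(2))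
  with gj(3) obtain f where p: "pivot_fun C f n" unfolding row_echelon_form_def by auto
  from gj(4) obtain P Q where PQ: "C = P * A" "P \<in> carrier_mat n n" "Q \<in> carrier_mat n n"
    "Q * P = 1\<^sub>m n" by auto
  define H where "H = mat n n (\<lambda>(j,i). if f i < n \<and> j = f i then (1::'a) else 0)"
  have Hc: "H \<in> carrier_mat n n" by (simp add: H_def)
  note simps = A Hc PQ(2,3) assoc_mult_mat[of _ n n _ n _ n] mult_carrier_mat[of _ n n _ n]
  have "Q * C = (Q * P) * A" unfolding PQ(1) by (simp add: assoc_mult_mat[OF PQ(3) PQ(2) A])
  hence QC: "Q * C = A" using PQ(4) A by simp
  have "A * (H * P) * A = A * H * C" by (simp add: simps PQ(1))
  also have "\<dots> = Q * (C * H * C)" by (simp add: simps Cc flip: QC)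
  also have "\<dots> = A" using QC row_echelon_ginverse[OF Cc p] by (simp add: H_def)
  finally show ?thesis using Hc PQ by (intro bexI[of _ "H * P"]) auto
qed

lemma hermitian_ginverse_exists:
  assumes A: "A \<in> carrier_mat n n" and AH: "adj A = A"
  shows "\<exists>G \<in> carrier_mat n n. adj G = G \<and> A * G * A = A"
proof -
  obtain G0 where G0: "G0 \<in> carrier_mat n n" and AG0A: "A * G0 * A = A"
    using ginverse_exists[OF A] by blast
  note simps = A G0 carrier_matD[OF A] carrier_matD[OF G0] adj_mult
    assoc_mult_mat[of _ n n _ n _ n] mult_carrier_mat[of _ n n _ n]
  have "A * adj G0 * A = adj (A * G0 * A)" using AH by (simp add: simps)
  hence AG0'A: "A * adj G0 * A = A" using AG0A AH by simp
  show ?thesis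
  proof (intro bexI conjI)
    show "adj (G0 * A * adj G0) = G0 * A * adj G0" using AH by (simp add: simps)
    have "A * (G0 * A * adj G0) * A = (A * G0 * A) * adj G0 * A" by (simp add: simps)
    thus "A * (G0 * A * adj G0) * A = A" using AG0A AG0'A by simp
  qed (simp add: simps)
qed

lemma hermitian_square_ginverse_cancel:
  assumes A: "A \<in> carrier_mat n n" and G: "G \<in> carrier_mat n n"
    and AH: "adj A = A" and GH: "adj G = G" and gi: "A * A * G * (A * A) = A * A"
  shows "A * G * (A * A) = A"
proof -
  note simps = A G carrier_matD[OF A] carrier_matD[OF G] adj_mult adj_minus
    assoc_mult_mat[of _ n n _ n _ n] mult_carrier_mat[of _ n n _ n]
    mult_minus_distrib_mat[of _ n n _ n] minus_mult_distrib_mat[of _ n n _ _ n] minus_carrier_mat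
  have gi': "A * (A * (G * (A * (A * Y)))) = A * (A * Y)" if Y: "Y \<in> carrier_mat n k" for Y k
  proof -
    note simpsY = simps Y assoc_mult_mat[of _ n n _ n _ k] mult_carrier_mat[of _ n n _ k]
    have "A * (A * (G * (A * (A * Y)))) = (A * A * G * (A * A)) * Y" by (simp add: simpsY)
    also have "\<dots> = A * A * Y" by (simp only: gi)
    finally show ?thesis by (simp add: simpsY)
  qed
  \<comment> \<open>\<open>D\<^sup>* D\<close> expands to \<open>A\<^sup>2 G A\<^sup>2 G A\<^sup>2 - 2 A\<^sup>2 G A\<^sup>2 + A\<^sup>2\<close>,
    which vanishes by \<open>gi\<close>\<close>
  define D where "D = A * G * (A * A) - A"
  have Dc: "D \<in> carrier_mat n n" by (simp add: D_def simps)
  have "A * (A * (G * (A * A))) = A * A" using gi by (simp add: simps)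
  hence "adj D * D = 0\<^sub>m n n"
    using gi'[of "G * (A * A)" n] AH GH by (simp add: D_def simps)
  hence "D = 0\<^sub>m n n" by (rule adj_mult_self_eq_0[OF Dc])
  moreover have "A * G * (A * A) = D + A"
    by (rule eq_matI) (auto simp: D_def simps)
  ultimately show ?thesis using A by simp
qed

lemma moore_penrose_exists_hermitian:
  assumes A: "A \<in> carrier_mat n n" and AH: "adj A = A"
  shows "\<exists>X. moore_penrose n A X"
proof -
  note simps0 = A carrier_matD[OF A] adj_mult
    assoc_mult_mat[of _ n n _ n _ n] mult_carrier_mat[of _ n n _ n]
  have "adj (A * A) = A * A" using AH by (simp add: simps0)
  then obtain G where G: "G \<in> carrier_mat n n" and GH: "adj G = G"
    and gi: "A * A * G * (A * A) = A * A"
    using hermitian_ginverse_exists[of "A * A" n] A by auto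
  note simps = simps0 G carrier_matD[OF G]
  have h1: "A * G * (A * A) = A" by (rule hermitian_square_ginverse_cancel[OF A G AH GH gi])
  have h2: "A * A * G * A = A"
  proof -
    have "A * A * G * A = adj (A * G * (A * A))" using AH GH by (simp add: simps)
    thus ?thesis using h1 AH by simp
  qed
  define X where "X = A * G * A * G * A"
  have AX: "A * X = A * G * A"
  proof -
    have "A * X = (A * A * G * A) * G * A" by (simp add: X_def simps)
    thus ?thesis by (simp only: h2)
  qed
  have XA: "X * A = A * G * A"
  proof -
    have "X * A = A * G * (A * G * (A * A))" by (simp add: X_def simps)
    thus ?thesis by (simp only: h1)
  qed
  have "moore_penrose n A X" unfolding moore_penrose_def
  proof (intro conjI)
    show "X \<in> carrier_mat n n" by (simp add: X_def simps)
    show "A * X * A = A" using h1 by (simp add: AX simps)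
    have "X * A * X = A * G * A * X" by (simp only: XA)
    also have "\<dots> = A * G * (A * A) * G * A * G * A" by (simp add: X_def simps)
    finally show "X * A * X = X" by (simp only: h1 X_def)
    show "adj (A * X) = A * X" "adj (X * A) = X * A" using AH GH by (simp_all add: AX XA simps)
  qed
  thus ?thesis ..
qed

lemma pinv_moore_penrose:
  assumes A: "A \<in> carrier_mat n n" and AH: "adj A = A"
  shows "moore_penrose n A (pinv n A)"
proof -
  have "pinv n A = (THE X. moore_penrose n A X)" by (simp add: pinv_def moore_penrose_def)
  also have "moore_penrose n A \<dots>"
    using moore_penrose_exists_hermitian[OF A AH] moore_penrose_unique[OF A] by (metis theI)
  finally show ?thesis .
qed

lemma pinv_hermitian:
  assumes A: "A \<in> carrier_mat n n" and AH: "adj A = A"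
  shows "adj (pinv n A) = pinv n A"
proof -
  define X where "X = pinv n A"
  have "moore_penrose n A X" unfolding X_def by (rule pinv_moore_penrose[OF A AH])
  hence Xc: "X \<in> carrier_mat n n" and X1: "A * X * A = A" and X2: "X * A * X = X"
    and X3: "adj (A * X) = A * X" and X4: "adj (X * A) = X * A"
    by (auto simp: moore_penrose_def)
  note simps = A Xc carrier_matD[OF A] carrier_matD[OF Xc] adj_mult
    assoc_mult_mat[of _ n n _ n _ n] mult_carrier_mat[of _ n n _ n]
  have "moore_penrose n A (adj X)" unfolding moore_penrose_def
  proof (intro conjI)
    show "adj X \<in> carrier_mat n n" using Xc by simp
    have "A * adj X * A = adj (A * X * A)" using AH by (simp add: simps)
    thus "A * adj X * A = A" using X1 AH by simp
    have "adj X * A * adj X = adj (X * A * X)" using AH by (simp add: simps)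
    thus "adj X * A * adj X = adj X" using X2 by simp
    have "A * adj X = adj (X * A)" using AH by (simp add: simps)
    thus "adj (A * adj X) = A * adj X" using X4 by simp
    have "adj X * A = adj (A * X)" using AH by (simp add: simps)
    thus "adj (adj X * A) = adj X * A" using X3 by simp
  qed
  thus ?thesis using moore_penrose_unique[OF A] \<open>moore_penrose n A X\<close> X_def by blast
qed

section \<open>Quadratic forms and Schur complements\<close>

lemma psdD: "psd n M \<Longrightarrow> qform n M v \<in> \<real> \<and> 0 \<le> Re (qform n M v)"
  by (simp add: psd_def)

lemma assoc_mult_mat_dim:
  "dim_col A = dim_row B \<Longrightarrow> dim_col B = dim_row C \<Longrightarrow> (A :: 'a :: comm_ring_1 mat) * B * C = A * (B * C)"
  by (rule assoc_mult_mat[of A "dim_row A" "dim_col A" B "dim_col B" C "dim_col C"]) auto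

lemma add_mult_distrib_mat_dim:
  "dim_row A = dim_row B \<Longrightarrow> dim_col A = dim_col B \<Longrightarrow> dim_col A = dim_row C \<Longrightarrow>
    ((A :: 'a :: comm_ring_1 mat) + B) * C = A * C + B * C"
  by (rule add_mult_distrib_mat[of A "dim_row A" "dim_col A" B C "dim_col C"]) auto

lemma mult_add_distrib_mat_dim:
  "dim_row B = dim_row C \<Longrightarrow> dim_col B = dim_col C \<Longrightarrow> dim_col A = dim_row B \<Longrightarrow>
    (A :: 'a :: comm_ring_1 mat) * (B + C) = A * B + A * C"
  by (rule mult_add_distrib_mat[of A "dim_row A" "dim_col A" B "dim_col B" C]) auto

lemma minus_mult_distrib_mat_dim:
  "dim_row A = dim_row B \<Longrightarrow> dim_col A = dim_col B \<Longrightarrow> dim_col A = dim_row C \<Longrightarrow>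
    ((A :: 'a :: comm_ring_1 mat) - B) * C = A * C - B * C"
  by (rule minus_mult_distrib_mat[of A "dim_row A" "dim_col A" B C "dim_col C"]) auto

lemma mult_minus_distrib_mat_dim:
  "dim_row B = dim_row C \<Longrightarrow> dim_col B = dim_col C \<Longrightarrow> dim_col A = dim_row B \<Longrightarrow>
    (A :: 'a :: comm_ring_1 mat) * (B - C) = A * B - A * C"
  by (rule mult_minus_distrib_mat[of A "dim_row A" "dim_col A" B "dim_col B" C]) auto

lemma schur_complement_form:
  assumes P: "P \<in> carrier_mat k k" and E1: "E1 \<in> carrier_mat k a" and E2: "E2 \<in> carrier_mat k b"
    and X: "X \<in> carrier_mat b b" and x: "x \<in> carrier_mat a 1"
    and PH: "adj P = P" and XH: "adj X = X" and XPX: "X * (adj E2 * P * E2) * X = X"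
  defines "y \<equiv> - (X * (adj E2 * P * E1) * x)"
  shows "adj (E1 * x + E2 * y) * P * (E1 * x + E2 * y) =
    adj x * (adj E1 * P * E1 - adj E1 * P * E2 * X * (adj E2 * P * E1)) * x"
proof -
  define P11 where "P11 = adj E1 * P * E1"
  define P12 where "P12 = adj E1 * P * E2"
  define P21 where "P21 = adj E2 * P * E1"
  define P22 where "P22 = adj E2 * P * E2"
  note dims = carrier_matD[OF P] carrier_matD[OF E1] carrier_matD[OF E2] carrier_matD[OF X]
    carrier_matD[OF x]
  have dP: "dim_row P11 = a" "dim_col P11 = a" "dim_row P12 = a" "dim_col P12 = b"
     "dim_row P21 = b" "dim_col P21 = a" "dim_row P22 = b" "dim_col P22 = b"
    using dims by (auto simp: P11_def P12_def P21_def P22_def)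
  have y: "y = - (X * (P21 * x))" using dims dP by (simp add: y_def P21_def assoc_mult_mat_dim)
  have dy: "dim_row y = b" "dim_col y = 1" using dims by (auto simp: y_def)
  have P12: "adj P21 = P12" using dims PH by (simp add: P12_def P21_def adj_mult assoc_mult_mat_dim)
  have ay: "adj y = - (adj x * (P12 * X))"
    using dims dP XH P12 by (simp add: y adj_uminus adj_mult assoc_mult_mat_dim)
  define T where "T = adj x * (P12 * (X * (P21 * x)))"
  have "adj (E1 * x + E2 * y) * P * (E1 * x + E2 * y) =
      (adj x * (P11 * x) + adj y * (P21 * x)) + (adj x * (P12 * y) + adj y * (P22 * y))"
    unfolding P11_def P12_def P21_def P22_def using dims dy
    by (simp add: adj_add adj_mult add_mult_distrib_mat_dim mult_add_distrib_mat_dim assoc_mult_mat_dim)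
  also have "adj y * (P21 * x) = - T"
    unfolding T_def ay using dims dP by (simp add: assoc_mult_mat_dim)
  also have "adj x * (P12 * y) = - T"
    unfolding T_def y using dims dP by (simp add: assoc_mult_mat_dim)
  also have "adj y * (P22 * y) = T"
  proof -
    have "X * (P22 * (X * (P21 * x))) = X * P22 * X * (P21 * x)"
      using dims dP by (simp add: assoc_mult_mat_dim)
    also have "\<dots> = X * (P21 * x)" using XPX by (simp add: P22_def)
    finally show ?thesis unfolding T_def ay unfolding y using dims dP by (simp add: assoc_mult_mat_dim)
  qed
  also have "(adj x * (P11 * x) + - T) + (- T + T) = adj x * (P11 * x) - T"
    unfolding T_def using dims dP by (intro eq_matI) auto
  also have "\<dots> = adj x * (P11 - P12 * X * P21) * x"
    unfolding T_def using dims dP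
    by (simp add: minus_mult_distrib_mat_dim mult_minus_distrib_mat_dim assoc_mult_mat_dim)
  finally show ?thesis unfolding P11_def P12_def P21_def P22_def .
qed

definition column_mat :: "nat \<Rightarrow> (nat \<Rightarrow> complex) \<Rightarrow> complex mat" where
  "column_mat n v = mat n 1 (\<lambda>(i,_). v i)"

lemma column_mat_carrier[simp]: "column_mat n v \<in> carrier_mat n 1"
  and dim_column_mat[simp]: "dim_row (column_mat n v) = n" "dim_col (column_mat n v) = 1"
  by (simp_all add: column_mat_def)

lemma column_mat_index: "w \<in> carrier_mat n 1 \<Longrightarrow> column_mat n (\<lambda>i. w $$ (i,0)) = w"
  by (intro eq_matI) (auto simp: column_mat_def)

lemma qform_column_mat:
  assumes "M \<in> carrier_mat n n"
  shows "qform n M v = (adj (column_mat n v) * M * column_mat n v) $$ (0,0)"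
proof -
  have "(adj (column_mat n v) * M * column_mat n v) $$ (0,0) = (\<Sum>j<n. \<Sum>i<n. cnj (v i) * M $$ (i,j) * v j)"
    using assms by (simp add: scalar_prod_def atLeast0LessThan column_mat_def sum_distrib_right)
  also have "\<dots> = qform n M v" unfolding qform_def by (rule sum.swap)
  finally show ?thesis by simp
qed

definition embed_mat :: "nat \<Rightarrow> nat \<Rightarrow> nat \<Rightarrow> complex mat" where
  "embed_mat n m s = mat n m (\<lambda>(i,j). if i = j + s then 1 else 0)"

lemma embed_mat_carrier[simp]: "embed_mat n m s \<in> carrier_mat n m"
  and dim_embed_mat[simp]: "dim_row (embed_mat n m s) = n" "dim_col (embed_mat n m s) = m"
  by (simp_all add: embed_mat_def)

lemma embed_mat_mult_index:
  assumes M: "M \<in> carrier_mat m c" and i: "i < n" and j: "j < c"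
  shows "(embed_mat n m s * M) $$ (i,j) = (if s \<le> i \<and> i - s < m then M $$ (i - s, j) else 0)"
proof -
  have "(embed_mat n m s * M) $$ (i,j) = (\<Sum>l<m. if l = i - s \<and> s \<le> i then M $$ (i - s, j) else 0)"
    using M i j by (auto simp: scalar_prod_def atLeast0LessThan embed_mat_def intro!: sum.cong)
  also have "\<dots> = (if s \<le> i \<and> i - s < m then M $$ (i - s, j) else 0)"
    by (cases "s \<le> i") auto
  finally show ?thesis .
qed

lemma compress_embed_mat:
  assumes M: "M \<in> carrier_mat n n" and "m + r \<le> n" "p + c \<le> n"
  shows "adj (embed_mat n m r) * M * embed_mat n p c = mat m p (\<lambda>(i,j). M $$ (i + r, j + c))"
proof -
  have "adj (embed_mat n m r) * M = mat m n (\<lambda>(i,k). M $$ (i + r, k))" (is "_ = ?R")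
  proof (rule eq_matI)
    fix i k assume "i < dim_row ?R" "k < dim_col ?R"
    with assms show "(adj (embed_mat n m r) * M) $$ (i,k) = ?R $$ (i,k)"
      by (simp add: scalar_prod_def atLeast0LessThan embed_mat_def if_distrib[of cnj]
          if_distrib[of "\<lambda>x. x * _"] cong: if_cong)
  qed (use M in auto)
  moreover have "?R * embed_mat n p c = mat m p (\<lambda>(i,j). M $$ (i + r, j + c))" (is "_ = ?S")
  proof (rule eq_matI)
    fix i j assume "i < dim_row ?S" "j < dim_col ?S"
    with assms show "(?R * embed_mat n p c) $$ (i,j) = ?S $$ (i,j)"
      by (simp add: scalar_prod_def atLeast0LessThan embed_mat_def if_distrib[of "\<lambda>x. _ * x"] cong: if_cong)
  qed auto
  ultimately show ?thesis by simp
qed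

lemma qform_schur_complement:
  fixes P X :: "complex mat" and x :: "nat \<Rightarrow> complex"
  assumes P: "P \<in> carrier_mat (a + b) (a + b)" and X: "X \<in> carrier_mat b b"
    and PH: "adj P = P" and XH: "adj X = X"
    and XDX: "X * mat b b (\<lambda>(i,j). P $$ (i + a, j + a)) * X = X"
  shows "\<exists>w. (\<forall>i<a. w i = x i) \<and> qform (a + b) P w =
    qform a (mat a a (\<lambda>(i,j). P $$ (i,j)) -
             mat a b (\<lambda>(i,j). P $$ (i, j + a)) * X * mat b a (\<lambda>(i,j). P $$ (i + a, j))) x"
    (is "\<exists>w. _ \<and> _ = qform a ?S x")
proof -
  define E1 where "E1 = embed_mat (a + b) a 0"
  define E2 where "E2 = embed_mat (a + b) b a"
  have E1c: "E1 \<in> carrier_mat (a + b) a" and E2c: "E2 \<in> carrier_mat (a + b) b"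
    by (simp_all add: E1_def E2_def)
  have blocks: "adj E1 * P * E1 = mat a a (\<lambda>(i,j). P $$ (i,j))"
    "adj E1 * P * E2 = mat a b (\<lambda>(i,j). P $$ (i, j + a))"
    "adj E2 * P * E1 = mat b a (\<lambda>(i,j). P $$ (i + a, j))"
    "adj E2 * P * E2 = mat b b (\<lambda>(i,j). P $$ (i + a, j + a))"
    unfolding E1_def E2_def using compress_embed_mat[OF P] by simp_all
  define xv where "xv = column_mat a x"
  have xvc: "xv \<in> carrier_mat a 1" unfolding xv_def by (rule column_mat_carrier)
  define yv where "yv = - (X * (adj E2 * P * E1) * xv)"
  define wv where "wv = E1 * xv + E2 * yv"
  have yvc: "yv \<in> carrier_mat b 1" using X by (auto simp: yv_def xv_def intro!: carrier_matI)
  have wvc: "wv \<in> carrier_mat (a + b) 1" using yvc by (auto simp: wv_def xv_def E1_def E2_def intro!: carrier_matI)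
  have Sc: "?S \<in> carrier_mat a a" by (auto intro!: carrier_matI)
  define w where "w = (\<lambda>i. wv $$ (i,0))"
  have "column_mat (a + b) w = wv" unfolding w_def by (rule column_mat_index[OF wvc])
  hence "qform (a + b) P w = (adj wv * P * wv) $$ (0,0)" using qform_column_mat[OF P, of w] by simp
  also have "adj wv * P * wv = adj xv * ?S * xv"
    unfolding wv_def yv_def blocks(1-3)[symmetric]
    by (rule schur_complement_form[OF P E1c E2c X xvc PH XH]) (use XDX blocks(4) in simp)
  also have "(adj xv * ?S * xv) $$ (0,0) = qform a ?S x"
    using qform_column_mat[OF Sc, of x] by (simp add: xv_def)
  finally have "qform (a + b) P w = qform a ?S x" .
  moreover have "w i = x i" if i: "i < a" for i
  proof -
    have "w i = (E1 * xv) $$ (i,0) + (E2 * yv) $$ (i,0)"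
      using i E1c E2c xvc yvc by (simp add: w_def wv_def)
    also have "\<dots> = x i" unfolding E1_def E2_def
      using i embed_mat_mult_index[OF xvc, of i "a + b" 0 0] embed_mat_mult_index[OF yvc, of i "a + b" 0 a]
      by (simp add: xv_def column_mat_def)
    finally show ?thesis .
  qed
  ultimately show ?thesis by blast
qed

lemma qform_add:
  "A \<in> carrier_mat n n \<Longrightarrow> B \<in> carrier_mat n n \<Longrightarrow> qform n (A + B) v = qform n A v + qform n B v"
  unfolding qform_def by (simp add: algebra_simps sum.distrib)

lemma qform_minus:
  "A \<in> carrier_mat n n \<Longrightarrow> B \<in> carrier_mat n n \<Longrightarrow> qform n (A - B) v = qform n A v - qform n B v"
  unfolding qform_def by (simp add: algebra_simps sum_subtractf)

lemma qform_cong: "(\<And>i. i < n \<Longrightarrow> v i = u i) \<Longrightarrow> qform n M v = qform n M u"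
  unfolding qform_def by (intro sum.cong refl) auto

lemma qform_cong_mat:
  "(\<And>i j. i < n \<Longrightarrow> j < n \<Longrightarrow> M $$ (i,j) = M' $$ (i,j)) \<Longrightarrow> qform n M v = qform n M' v"
  unfolding qform_def by (intro sum.cong refl) auto

lemma sum_lessThan_add: "(\<Sum>i<a + (b::nat). f i) = (\<Sum>i<a. f i) + (\<Sum>i<b. f (i + a))"
  by (induction b) (simp_all add: add_ac)

lemma qform_block_diagonal:
  assumes "\<And>i j. i < a \<Longrightarrow> j < b \<Longrightarrow> M $$ (i, j + a) = 0"
    and "\<And>i j. i < a \<Longrightarrow> j < b \<Longrightarrow> M $$ (j + a, i) = 0"
  shows "qform (a + b) M v = qform a M v + qform b (mat b b (\<lambda>(i,j). M $$ (i + a, j + a))) (\<lambda>i. v (i + a))"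
  using assms by (simp add: qform_def sum_lessThan_add sum.distrib)

lemma qform_2: "qform 2 M x = cnj (x 0) * M $$ (0,0) * x 0 + cnj (x 0) * M $$ (0,1) * x 1
    + cnj (x 1) * M $$ (1,0) * x 0 + cnj (x 1) * M $$ (1,1) * x 1"
  unfolding qform_def by (simp add: eval_nat_numeral lessThan_Suc)

lemma psd_2x2_entries:
  assumes "psd 2 H"
  shows "H $$ (0,0) \<in> \<real>" "H $$ (1,1) \<in> \<real>" "0 \<le> Re (H $$ (0,0))" "0 \<le> Re (H $$ (1,1))"
    "H $$ (1,0) = cnj (H $$ (0,1))" "(cmod (H $$ (0,1)))\<^sup>2 \<le> Re (H $$ (0,0)) * Re (H $$ (1,1))"
proof -
  define a b c d where "a = H $$ (0,0)" and "b = H $$ (0,1)" and "c = H $$ (1,0)" and "d = H $$ (1,1)"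
  note Q = psdD[OF assms]
  have q: "qform 2 H x = cnj (x 0) * a * x 0 + cnj (x 0) * b * x 1 + cnj (x 1) * c * x 0
      + cnj (x 1) * d * x 1" for x
    unfolding qform_2 a_def b_def c_def d_def by simp
  have a: "a \<in> \<real> \<and> 0 \<le> Re a" using Q[of "\<lambda>i. if i = 0 then 1 else 0"] unfolding q by simp
  have d: "d \<in> \<real> \<and> 0 \<le> Re d" using Q[of "\<lambda>i. if i = 0 then 0 else 1"] unfolding q by simp
  have "a + b + c + d \<in> \<real>" using Q[of "\<lambda>i. 1"] unfolding q by simp
  moreover have "a + \<i> * b - \<i> * c + d \<in> \<real>"
    using Q[of "\<lambda>i. if i = 0 then 1 else \<i>"] unfolding q by (simp add: algebra_simps)
  ultimately have cb: "c = cnj b" using a d by (simp add: complex_is_Real_iff complex_eq_iff)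
  show "H $$ (0,0) \<in> \<real>" "H $$ (1,1) \<in> \<real>" "0 \<le> Re (H $$ (0,0))" "0 \<le> Re (H $$ (1,1))"
    "H $$ (1,0) = cnj (H $$ (0,1))"
    using a d cb by (auto simp: a_def b_def c_def d_def)
  define al de where "al = Re a" and "de = Re d"
  have av: "a = complex_of_real al" "d = complex_of_real de"
    using a d by (auto simp: complex_eq_iff al_def de_def complex_is_Real_iff)
  have test: "0 \<le> Re (qform 2 H (\<lambda>i. if i = 0 then s else t))" for s t using Q by blast
  have v1: "0 \<le> al * (al * de - ((Re b)\<^sup>2 + (Im b)\<^sup>2))"
    using test[of "- b" a] unfolding q cb av by (simp add: algebra_simps power2_eq_square)
  have v2: "0 \<le> de * (al * de - ((Re b)\<^sup>2 + (Im b)\<^sup>2))"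
    using test[of d "- cnj b"] unfolding q cb av by (simp add: algebra_simps power2_eq_square)
  have v3: "0 \<le> al + de * ((Re b)\<^sup>2 + (Im b)\<^sup>2) - 2 * ((Re b)\<^sup>2 + (Im b)\<^sup>2)"
    using test[of 1 "- cnj b"] unfolding q cb av by (simp add: algebra_simps power2_eq_square)
  have "(Re b)\<^sup>2 + (Im b)\<^sup>2 \<le> al * de"
  proof (cases "al > 0 \<or> de > 0")
    case True thus ?thesis using v1 v2 by (auto simp: zero_le_mult_iff)
  next
    case False
    hence "al = 0" "de = 0" using a d by (auto simp: al_def de_def)
    thus ?thesis using v3 by simp
  qed
  thus "(cmod (H $$ (0,1)))\<^sup>2 \<le> Re (H $$ (0,0)) * Re (H $$ (1,1))"
    by (simp add: a_def b_def d_def al_def de_def cmod_power2)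
qed

section \<open>Symplectic forms and one-mode covariance matrices\<close>

lemma Jflip_carrier[simp]: "Jflip n S \<in> carrier_mat (2 * n) (2 * n)"
  and dim_Jflip[simp]: "dim_row (Jflip n S) = 2 * n" "dim_col (Jflip n S) = 2 * n"
  by (simp_all add: Jflip_def)

lemma Jflip_index:
  "i < 2 * n \<Longrightarrow> j < 2 * n \<Longrightarrow> Jflip n S $$ (i,j) =
    (if i div 2 = j div 2 then (if i div 2 \<in> S then -1 else 1) * J1entry (i mod 2) (j mod 2) else 0)"
  by (simp add: Jflip_def)

lemma Jflip_shift:
  assumes "m + k \<le> n" "i < 2 * m" "j < 2 * m"
  shows "Jflip n T $$ (i + 2 * k, j + 2 * k) = Jflip m {l. l + k \<in> T} $$ (i,j)"
  using assms by (simp add: Jflip_index add.commute)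

lemma Jflip_off_diagonal:
  "i < 2 * n \<Longrightarrow> j < 2 * n \<Longrightarrow> i < 2 * k \<longleftrightarrow> \<not> j < 2 * k \<Longrightarrow> Jflip n S $$ (i,j) = 0"
  by (auto simp: Jflip_index; presburger)

lemma hermitian_cmat_minus_iJflip:
  assumes g: "g \<in> carrier_mat (2 * n) (2 * n)" and sym: "transpose_mat g = g"
  shows "adj (cmat g - \<i> \<cdot>\<^sub>m Jflip n S) = cmat g - \<i> \<cdot>\<^sub>m Jflip n S"
proof (rule eq_matI)
  fix i j assume "i < dim_row (cmat g - \<i> \<cdot>\<^sub>m Jflip n S)" "j < dim_col (cmat g - \<i> \<cdot>\<^sub>m Jflip n S)"
  hence i: "i < 2 * n" and j: "j < 2 * n" by auto
  have "g $$ (j,i) = g $$ (i,j)" using sym i j g by (metis carrier_matD index_transpose_mat(1))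
  thus "adj (cmat g - \<i> \<cdot>\<^sub>m Jflip n S) $$ (i,j) = (cmat g - \<i> \<cdot>\<^sub>m Jflip n S) $$ (i,j)"
    using i j g by (auto simp: Jflip_index J1entry_def mod2_eq_if)
qed auto

lemma CM_one_mode_psd:
  assumes "CM 1 g"
  shows "psd 2 (cmat g - \<i> \<cdot>\<^sub>m Jflip 1 S)"
proof -
  have g: "g \<in> carrier_mat (2 * 1) (2 * 1)" and base: "psd 2 (cmat g - \<i> \<cdot>\<^sub>m Jflip 1 {})"
    using assms by (simp_all add: CM_def)
  have "qform 2 (cmat g - \<i> \<cdot>\<^sub>m Jflip 1 S) v = (if 0 \<in> S
      then cnj (qform 2 (cmat g - \<i> \<cdot>\<^sub>m Jflip 1 {}) (\<lambda>i. cnj (v i)))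
      else qform 2 (cmat g - \<i> \<cdot>\<^sub>m Jflip 1 {}) v)" for v
    using g by (simp add: qform_2 Jflip_index J1entry_def algebra_simps)
  with base show ?thesis by (auto simp: psd_def complex_is_Real_iff)
qed

lemma CM_one_mode_entries:
  assumes "CM 1 g"
  shows "0 < g $$ (0,0)" "0 < g $$ (1,1)" "g $$ (1,0) = g $$ (0,1)"
    "1 \<le> g $$ (0,0) * g $$ (1,1) - (g $$ (0,1))\<^sup>2"
proof -
  have g: "g \<in> carrier_mat (2 * 1) (2 * 1)" and pd: "posdef_real 2 g" and sym: "transpose_mat g = g"
    using assms by (simp_all add: CM_def)
  have "0 < (\<Sum>i<2. \<Sum>j<2. (if i = k then 1 else 0) * g $$ (i,j) * (if j = k then 1 else 0))"
    if "k < 2" for k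
    using pd that unfolding posdef_real_def by (elim conjE allE impE) auto
  from this[of 0] this[of 1] show pos: "0 < g $$ (0,0)" "0 < g $$ (1,1)"
    by (simp_all add: eval_nat_numeral lessThan_Suc)
  have "transpose_mat g $$ (1,0) = g $$ (0,1)" using g by simp
  thus sym01: "g $$ (1,0) = g $$ (0,1)" using sym by simp
  define a b d where "a = g $$ (0,0)" and "b = g $$ (0,1)" and "d = g $$ (1,1)"
  define v where "v i = (if i = 0 then - (complex_of_real b + \<i>) else complex_of_real a)" for i :: nat
  have "qform 2 (cmat g - \<i> \<cdot>\<^sub>m Jflip 1 {}) v = complex_of_real (a * (a * d - b\<^sup>2 - 1))"
    using g sym01
    by (simp add: qform_2 v_def Jflip_index J1entry_def a_def b_def d_def algebra_simps
        complex_eq_iff power2_eq_square)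
  moreover have "psd 2 (cmat g - \<i> \<cdot>\<^sub>m Jflip 1 {})" using CM_one_mode_psd[OF assms] .
  ultimately have "0 \<le> a * (a * d - b\<^sup>2 - 1)" unfolding psd_def by (metis Re_complex_of_real)
  thus "1 \<le> g $$ (0,0) * g $$ (1,1) - (g $$ (0,1))\<^sup>2"
    using pos by (simp add: a_def b_def d_def zero_le_mult_iff)
qed

text \<open>The determinant bound rests on
  \<open>(a + \<alpha>)(d + \<delta>) - (b + p)\<^sup>2 - q\<^sup>2 = (a d - b\<^sup>2) + (\<alpha> \<delta> - p\<^sup>2 - q\<^sup>2) + (a \<delta> + d \<alpha> - 2 b p)\<close>,
  whose last summand is nonnegative by AM-GM.\<close>
lemma trace_det_bounds_real:
  fixes a b d \<alpha> \<delta> p q :: real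
  assumes "0 < a" "0 < d" "1 \<le> a * d - b\<^sup>2" "0 \<le> \<alpha>" "0 \<le> \<delta>" "p\<^sup>2 + q\<^sup>2 \<le> \<alpha> * \<delta>"
  shows "2 \<le> a + d + \<alpha> + \<delta>" "0 < (a + \<alpha>) * (d + \<delta>) - ((b + p)\<^sup>2 + q\<^sup>2)"
proof -
  have "1 \<le> a * d" using assms(3) zero_le_power2[of b] by linarith
  hence "(2::real)\<^sup>2 \<le> 4 * (a * d)" by simp
  also have "\<dots> \<le> (a + d)\<^sup>2" using zero_le_power2[of "a - d"] by (simp add: power2_eq_square algebra_simps)
  finally have "2 \<le> a + d" by (rule power2_le_imp_le) (use assms(1,2) in linarith)
  thus "2 \<le> a + d + \<alpha> + \<delta>" using assms by simp
  have "b\<^sup>2 * p\<^sup>2 \<le> (a * d) * (\<alpha> * \<delta>)"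
    using assms zero_le_power2[of q] zero_le_power2[of b] zero_le_power2[of p]
    by (intro mult_mono) linarith+
  also have "4 * \<dots> \<le> (a * \<delta> + d * \<alpha>)\<^sup>2"
    using zero_le_power2[of "a * \<delta> - d * \<alpha>"] by (simp add: power2_eq_square algebra_simps)
  finally have "\<bar>2 * b * p\<bar>\<^sup>2 \<le> (a * \<delta> + d * \<alpha>)\<^sup>2" by (simp add: power_mult_distrib)
  hence "\<bar>2 * b * p\<bar> \<le> a * \<delta> + d * \<alpha>" by (rule power2_le_imp_le) (use assms in simp)
  thus "0 < (a + \<alpha>) * (d + \<delta>) - ((b + p)\<^sup>2 + q\<^sup>2)"
    using assms by (simp add: power2_eq_square algebra_simps)
qed

lemma det_2x2:
  assumes "A \<in> carrier_mat 2 2"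
  shows "det A = A $$ (0,0) * A $$ (1,1) - A $$ (0,1) * A $$ (1,0)"
proof -
  have "det A = (\<Sum>i<2. A $$ (i,0) * cofactor A i 0)"
    by (rule laplace_expansion_column[OF assms]) simp
  also have "\<dots> = A $$ (0,0) * cofactor A 0 0 + A $$ (1,0) * cofactor A 1 0"
    by (simp add: numeral_2_eq_2)
  also have "cofactor A 0 0 = A $$ (1,1)"
    unfolding cofactor_def using assms by (subst det_single) (auto simp: mat_delete_def)
  also have "cofactor A 1 0 = - A $$ (0,1)"
    unfolding cofactor_def using assms by (subst det_single) (auto simp: mat_delete_def)
  finally show ?thesis by (simp add: algebra_simps)
qed

lemma trace_det_bounds_of_CM_le:
  assumes N: "N \<in> carrier_mat 2 2" and g: "CM 1 g" and le: "psd 2 (N - cmat g)"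
  shows "mtrace N \<in> \<real> \<and> 2 \<le> Re (mtrace N) \<and> det N \<in> \<real> \<and> 0 < Re (det N)"
proof -
  define H where "H = N - cmat g"
  note Hs = psd_2x2_entries[OF le[folded H_def]]
  note gs = CM_one_mode_entries[OF g]
  have gc: "g \<in> carrier_mat 2 2" using g by (simp add: CM_def)
  define a b d where "a = g $$ (0,0)" and "b = g $$ (0,1)" and "d = g $$ (1,1)"
  define \<alpha> \<delta> z where "\<alpha> = Re (H $$ (0,0))" and "\<delta> = Re (H $$ (1,1))" and "z = H $$ (0,1)"
  have N_H: "N $$ (i,j) = H $$ (i,j) + complex_of_real (g $$ (i,j))" if "i < 2" "j < 2" for i j
    using that N gc by (simp add: H_def)
  have N00: "N $$ (0,0) = complex_of_real (a + \<alpha>)"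
    using Hs(1) by (simp add: N_H a_def \<alpha>_def complex_is_Real_iff complex_eq_iff)
  have N11: "N $$ (1,1) = complex_of_real (d + \<delta>)"
    using Hs(2) N_H[of 1 1] by (simp add: d_def \<delta>_def complex_is_Real_iff complex_eq_iff)
  have N01: "N $$ (0,1) = z + complex_of_real b"
    using N_H[of 0 1] by (simp add: b_def z_def)
  have N10: "N $$ (1,0) = cnj z + complex_of_real b"
    using Hs(5) gs(3) N_H[of 1 0] by (simp add: b_def z_def)
  have tr: "mtrace N = complex_of_real (a + d + \<alpha> + \<delta>)"
    using N N00 N11 by (simp add: mtrace_def numeral_2_eq_2)
  have "det N = N $$ (0,0) * N $$ (1,1) - N $$ (0,1) * N $$ (1,0)" by (rule det_2x2[OF N])
  also have "\<dots> = complex_of_real ((a + \<alpha>) * (d + \<delta>) - ((b + Re z)\<^sup>2 + (Im z)\<^sup>2))"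
    unfolding N00 N11 N01 N10 by (simp add: complex_eq_iff power2_eq_square algebra_simps)
  finally have dt: "det N = complex_of_real ((a + \<alpha>) * (d + \<delta>) - ((b + Re z)\<^sup>2 + (Im z)\<^sup>2))" .
  have "(Re z)\<^sup>2 + (Im z)\<^sup>2 \<le> \<alpha> * \<delta>" using Hs(6) by (simp add: z_def \<alpha>_def \<delta>_def cmod_power2)
  with gs Hs(3,4) show ?thesis unfolding tr dt
    using trace_det_bounds_real[of a d b \<alpha> \<delta> "Re z" "Im z"] by (simp add: a_def b_def d_def \<alpha>_def \<delta>_def)
qed

section \<open>Three-mode covariance matrices\<close>

lemma dsum3_carrier: "a \<in> carrier_mat 2 2 \<Longrightarrow> b \<in> carrier_mat 2 2 \<Longrightarrow> c \<in> carrier_mat 2 2 \<Longrightarrow>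
    dsum3 a b c \<in> carrier_mat 6 6"
  unfolding dsum3_def by (auto intro!: carrier_matI)

lemma qform_dsum3_minus_iJflip:
  assumes a: "a \<in> carrier_mat 2 2" and b: "b \<in> carrier_mat 2 2" and c: "c \<in> carrier_mat 2 2"
  shows "qform 6 (cmat (dsum3 a b c) - \<i> \<cdot>\<^sub>m Jflip 3 T) v =
    qform 2 (cmat a - \<i> \<cdot>\<^sub>m Jflip 1 T) v
    + qform 2 (cmat b - \<i> \<cdot>\<^sub>m Jflip 1 {l. l + 1 \<in> T}) (\<lambda>i. v (i + 2))
    + qform 2 (cmat c - \<i> \<cdot>\<^sub>m Jflip 1 {l. l + 2 \<in> T}) (\<lambda>i. v (i + 4))"
proof -
  define M where "M = cmat (dsum3 a b c) - \<i> \<cdot>\<^sub>m Jflip 3 T"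
  have entry: "M $$ (i,j) = complex_of_real (dsum3 a b c $$ (i,j)) - \<i> * Jflip 3 T $$ (i,j)"
    if "i < 6" "j < 6" for i j
    using that dsum3_carrier[OF a b c] by (simp add: M_def)
  have s6: "qform (4 + 2) M v = qform 4 M v + qform 2 (mat 2 2 (\<lambda>(i,j). M $$ (i + 4, j + 4))) (\<lambda>i. v (i + 4))"
    using a b c by (intro qform_block_diagonal) (auto simp: entry dsum3_def Jflip_off_diagonal[of _ 3 _ 2])
  moreover have s4: "qform (2 + 2) M v = qform 2 M v + qform 2 (mat 2 2 (\<lambda>(i,j). M $$ (i + 2, j + 2))) (\<lambda>i. v (i + 2))"
    using a b c by (intro qform_block_diagonal) (auto simp: entry dsum3_def Jflip_off_diagonal[of _ 3 _ 1])
  moreover have "qform 2 M v = qform 2 (cmat a - \<i> \<cdot>\<^sub>m Jflip 1 T) v"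
    using a Jflip_shift[of 1 0 3 _ _ T] by (intro qform_cong_mat) (simp add: entry dsum3_def)
  moreover have "qform 2 (mat 2 2 (\<lambda>(i,j). M $$ (i + 2, j + 2))) = qform 2 (cmat b - \<i> \<cdot>\<^sub>m Jflip 1 {l. l + 1 \<in> T})"
    using a b Jflip_shift[of 1 1 3 _ _ T] by (intro ext qform_cong_mat) (simp add: entry dsum3_def)
  moreover have "qform 2 (mat 2 2 (\<lambda>(i,j). M $$ (i + 4, j + 4))) = qform 2 (cmat c - \<i> \<cdot>\<^sub>m Jflip 1 {l. l + 2 \<in> T})"
    using a b c Jflip_shift[of 1 2 3 _ _ T] by (intro ext qform_cong_mat) (simp add: entry dsum3_def)
  ultimately show ?thesis by (simp add: M_def)
qed

lemma three_mode_blocks: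
  fixes \<gamma> :: "real mat" and T :: "nat set"
  assumes \<gamma>: "\<gamma> \<in> carrier_mat 6 6" and sym: "transpose_mat \<gamma> = \<gamma>"
  defines "P \<equiv> cmat \<gamma> - \<i> \<cdot>\<^sub>m Jflip 3 T"
  shows "mat 2 2 (\<lambda>(i,j). P $$ (i,j)) = cmat (blkA \<gamma>) - \<i> \<cdot>\<^sub>m Jflip 1 T"
    and "mat 2 4 (\<lambda>(i,j). P $$ (i, j + 2)) = cmat (blkC \<gamma>)"
    and "mat 4 2 (\<lambda>(i,j). P $$ (i + 2, j)) = cmat (transpose_mat (blkC \<gamma>))"
    and "mat 4 4 (\<lambda>(i,j). P $$ (i + 2, j + 2)) = cmat (blkB \<gamma>) - \<i> \<cdot>\<^sub>m Jflip 2 {l. l + 1 \<in> T}"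
proof -
  have P: "P $$ (i,j) = complex_of_real (\<gamma> $$ (i,j)) - \<i> * Jflip 3 T $$ (i,j)" if "i < 6" "j < 6" for i j
    using that \<gamma> by (simp add: P_def)
  have "\<gamma> $$ (i,j) = \<gamma> $$ (j,i)" if "i < 6" "j < 6" for i j
    using that \<gamma> sym by (metis carrier_matD index_transpose_mat(1))
  with Jflip_shift[of 1 0 3 _ _ T] Jflip_shift[of 2 1 3 _ _ T] Jflip_off_diagonal[of _ 3 _ 1 T]
  show "mat 2 2 (\<lambda>(i,j). P $$ (i,j)) = cmat (blkA \<gamma>) - \<i> \<cdot>\<^sub>m Jflip 1 T"
    and "mat 2 4 (\<lambda>(i,j). P $$ (i, j + 2)) = cmat (blkC \<gamma>)"
    and "mat 4 2 (\<lambda>(i,j). P $$ (i + 2, j)) = cmat (transpose_mat (blkC \<gamma>))"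
    and "mat 4 4 (\<lambda>(i,j). P $$ (i + 2, j + 2)) = cmat (blkB \<gamma>) - \<i> \<cdot>\<^sub>m Jflip 2 {l. l + 1 \<in> T}"
    by (auto intro!: eq_matI simp: P blkA_def blkB_def blkC_def)
qed

lemma dim_blocks[simp]:
  "dim_row (blkA \<gamma>) = 2" "dim_col (blkA \<gamma>) = 2" "dim_row (blkB \<gamma>) = 4" "dim_col (blkB \<gamma>) = 4"
  "dim_row (blkC \<gamma>) = 2" "dim_col (blkC \<gamma>) = 4"
  by (simp_all add: blkA_def blkB_def blkC_def)

lemma Nmat_carrier: "Nmat S \<gamma> \<in> carrier_mat 2 2"
  unfolding Nmat_def by (auto intro!: carrier_matI)

lemma qform_Nmat_attained:
  assumes \<gamma>: "\<gamma> \<in> carrier_mat 6 6" and sym: "transpose_mat \<gamma> = \<gamma>"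
  shows "\<exists>w. (\<forall>i<2. w i = x i) \<and>
    qform 6 (cmat \<gamma> - \<i> \<cdot>\<^sub>m Jflip 3 (Suc ` S)) w = qform 2 (Nmat S \<gamma> - \<i> \<cdot>\<^sub>m Jflip 1 (Suc ` S)) x"
proof -
  define P where "P = cmat \<gamma> - \<i> \<cdot>\<^sub>m Jflip 3 (Suc ` S)"
  define B' where "B' = cmat (blkB \<gamma>) - \<i> \<cdot>\<^sub>m Jflip 2 S"
  have "{l. l + 1 \<in> Suc ` S} = S" by auto
  note blocks = three_mode_blocks[OF \<gamma> sym, of "Suc ` S", folded P_def, unfolded this, folded B'_def]
  have Pc: "P \<in> carrier_mat (2 + 4) (2 + 4)" by (auto simp: P_def intro!: carrier_matI)
  have PH: "adj P = P" using \<gamma> sym hermitian_cmat_minus_iJflip[of \<gamma> 3] by (simp add: P_def)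
  have B'c: "B' \<in> carrier_mat 4 4" by (auto simp: B'_def intro!: carrier_matI)
  have B'H: "adj B' = B'"
    unfolding blocks(4)[symmetric] by (rule hermitian_principal_submatrix[OF Pc PH]) simp
  have Xc: "pinv 4 B' \<in> carrier_mat 4 4" and XH: "adj (pinv 4 B') = pinv 4 B'"
    and XBX: "pinv 4 B' * B' * pinv 4 B' = pinv 4 B'"
    using pinv_moore_penrose[OF B'c B'H] pinv_hermitian[OF B'c B'H] by (simp_all add: moore_penrose_def)
  have "Nmat S \<gamma> - \<i> \<cdot>\<^sub>m Jflip 1 (Suc ` S) = cmat (blkA \<gamma>) - \<i> \<cdot>\<^sub>m Jflip 1 (Suc ` S)
      - cmat (blkC \<gamma>) * pinv 4 B' * cmat (transpose_mat (blkC \<gamma>))"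
    using Xc by (intro eq_matI) (auto simp: Nmat_def B'_def)
  with qform_schur_complement[OF Pc Xc PH XH, unfolded blocks, OF XBX, of x] show ?thesis
    by (simp add: P_def)
qed

lemma qform_separable_bound:
  fixes T :: "nat set" and w :: "nat \<Rightarrow> complex"
  assumes \<gamma>: "\<gamma> \<in> carrier_mat 6 6" and A: "CM 1 gA" and B: "CM 1 gB" and C: "CM 1 gC"
    and sep: "psd 6 (cmat (\<gamma> - dsum3 gA gB gC))"
  defines "d \<equiv> qform 6 (cmat \<gamma> - \<i> \<cdot>\<^sub>m Jflip 3 T) w - qform 2 (cmat gA - \<i> \<cdot>\<^sub>m Jflip 1 T) w"
  shows "d \<in> \<real> \<and> 0 \<le> Re d"
proof -
  have gA: "gA \<in> carrier_mat 2 2" and gB: "gB \<in> carrier_mat 2 2" and gC: "gC \<in> carrier_mat 2 2"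
    using A B C by (simp_all add: CM_def)
  have dc: "dsum3 gA gB gC \<in> carrier_mat 6 6" by (rule dsum3_carrier[OF gA gB gC])
  have "cmat \<gamma> - \<i> \<cdot>\<^sub>m Jflip 3 T = cmat (\<gamma> - dsum3 gA gB gC) + (cmat (dsum3 gA gB gC) - \<i> \<cdot>\<^sub>m Jflip 3 T)"
    using \<gamma> dc by (intro eq_matI) auto
  moreover have "cmat (\<gamma> - dsum3 gA gB gC) \<in> carrier_mat 6 6"
    and "cmat (dsum3 gA gB gC) - \<i> \<cdot>\<^sub>m Jflip 3 T \<in> carrier_mat 6 6"
    using dc by (auto intro!: carrier_matI)
  ultimately have "d = qform 6 (cmat (\<gamma> - dsum3 gA gB gC)) w
      + qform 2 (cmat gB - \<i> \<cdot>\<^sub>m Jflip 1 {l. l + 1 \<in> T}) (\<lambda>i. w (i + 2))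
      + qform 2 (cmat gC - \<i> \<cdot>\<^sub>m Jflip 1 {l. l + 2 \<in> T}) (\<lambda>i. w (i + 4))"
    unfolding d_def by (simp add: qform_add qform_dsum3_minus_iJflip[OF gA gB gC])
  with psdD[OF sep, of w] psdD[OF CM_one_mode_psd[OF B, of "{l. l + 1 \<in> T}"], of "\<lambda>i. w (i + 2)"]
    psdD[OF CM_one_mode_psd[OF C, of "{l. l + 2 \<in> T}"], of "\<lambda>i. w (i + 4)"]
  show ?thesis by (simp add: Reals_add)
qed

lemma psd_Nmat_minus_first_mode:
  assumes \<gamma>: "\<gamma> \<in> carrier_mat 6 6" and sym: "transpose_mat \<gamma> = \<gamma>"
    and A: "CM 1 gA" and B: "CM 1 gB" and C: "CM 1 gC"
    and sep: "psd 6 (cmat (\<gamma> - dsum3 gA gB gC))"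
  shows "psd 2 (Nmat S \<gamma> - cmat gA)"
proof -
  define J where "J = \<i> \<cdot>\<^sub>m Jflip 1 (Suc ` S)"
  have gA: "gA \<in> carrier_mat 2 2" using A by (simp add: CM_def)
  have "Nmat S \<gamma> - cmat gA = (Nmat S \<gamma> - J) - (cmat gA - J)"
    using gA Nmat_carrier by (intro eq_matI) (auto simp: J_def)
  moreover have "Nmat S \<gamma> - J \<in> carrier_mat 2 2" "cmat gA - J \<in> carrier_mat 2 2"
    using gA by (auto simp: J_def intro!: carrier_matI)
  ultimately have split: "qform 2 (Nmat S \<gamma> - cmat gA) x = qform 2 (Nmat S \<gamma> - J) x - qform 2 (cmat gA - J) x" for x
    by (simp add: qform_minus)
  have "qform 2 (Nmat S \<gamma> - cmat gA) x \<in> \<real> \<and> 0 \<le> Re (qform 2 (Nmat S \<gamma> - cmat gA) x)" for x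
  proof -
    obtain w where "\<forall>i<2. w i = x i"
      and "qform 6 (cmat \<gamma> - \<i> \<cdot>\<^sub>m Jflip 3 (Suc ` S)) w = qform 2 (Nmat S \<gamma> - J) x"
      using qform_Nmat_attained[OF \<gamma> sym, of x S] unfolding J_def by blast
    hence "qform 2 (Nmat S \<gamma> - cmat gA) x = qform 6 (cmat \<gamma> - \<i> \<cdot>\<^sub>m Jflip 3 (Suc ` S)) w
        - qform 2 (cmat gA - \<i> \<cdot>\<^sub>m Jflip 1 (Suc ` S)) w"
      using qform_cong[of 2 w x] by (simp add: split J_def)
    with qform_separable_bound[OF \<gamma> A B C sep] show ?thesis by simp
  qed
  thus ?thesis using Nmat_carrier gA by (simp add: psd_def minus_carrier_mat)
qed

theorem mainTheorem8:
  fixes \<gamma> :: "real mat"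
  assumes "PPT3 \<gamma>"
    and "fully_separable3 \<gamma>"
  shows "mtrace (Nmat {} \<gamma>) \<in> \<real> \<and> 2 \<le> Re (mtrace (Nmat {} \<gamma>))
       \<and> mtrace (Nmat {1} \<gamma>) \<in> \<real> \<and> 2 \<le> Re (mtrace (Nmat {1} \<gamma>))
       \<and> det (Nmat {} \<gamma>) \<in> \<real> \<and> 0 < Re (det (Nmat {} \<gamma>))
       \<and> det (Nmat {1} \<gamma>) \<in> \<real> \<and> 0 < Re (det (Nmat {1} \<gamma>))"
proof -
  have \<gamma>: "\<gamma> \<in> carrier_mat 6 6" and sym: "transpose_mat \<gamma> = \<gamma>"
    using assms(1) by (simp_all add: PPT3_def CM_def)
  obtain gA gB gC where A: "CM 1 gA" and "CM 1 gB" "CM 1 gC"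
    and "psd 6 (cmat (\<gamma> - dsum3 gA gB gC))"
    using assms(2) unfolding fully_separable3_def by blast
  hence "psd 2 (Nmat S \<gamma> - cmat gA)" for S
    using psd_Nmat_minus_first_mode[OF \<gamma> sym] by blast
  with A show ?thesis using trace_det_bounds_of_CM_le[OF Nmat_carrier] by blast
qed

end
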